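(* Let $\mathcal A\in\mathbb R^{n_1}\otimes\cdots\otimes\mathbb R^{n_k}$, $1\le s\le k$, $2\le r\le\min\{n_1,\dots,n_s\}$. Let $U=(U^{(1)},\dots,U^{(k)})\in\mathrm V(r,n_1)\times\cdots\times\mathrm V(r,n_s)\times\mathrm B(r,n_{s+1})\times\cdots\times\mathrm B(r,n_k)$ be a KKT point of $\mathrm{mLRPOTA}(r)$ and let $1\le j\le r$. Let $\hat U=(\hat U^{(1)},\dots,\hat U^{(k)})\in\mathrm V(r-1,n_1)\times\cdots\times\mathrm V(r-1,n_s)\times\mathrm B(r-1,n_{s+1})\times\cdots\times\mathrm B(r-1,n_k)$, where $\hat U^{(i)}$ is obtained from $U^{(i)}$ by deleting its $j$-th column. If $\lambda_j(U)=0$, then $\hat U$ is a KKT point of $\mathrm{mLRPOTA}(r-1)$.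
   Context: $\mathrm V(t,n)=\{U\in\mathbb R^{n\times t}:U^{\mathsf T}U=I_t\}$; $\mathrm B(t,n)$: $n\times t$ real matrices with unit columns. For $U=(U^{(1)},\dots,U^{(k)})$, $U^{(i)}\in\mathbb R^{n_i\times t}$ with columns $\mathbf u^{(i)}_j$: $\lambda_j(U)=\langle\mathcal A,\mathbf u^{(1)}_j\otimes\cdots\otimes\mathbf u^{(k)}_j\rangle$; $\mathbf v^{(i)}_j\in\mathbb R^{n_i}$ is the contraction of $\mathcal A$ with $\mathbf u^{(l)}_j$ for all $l\ne i$; $V^{(i)}=[\mathbf v^{(i)}_1,\dots,\mathbf v^{(i)}_t]$; $\Lambda=\operatorname{diag}(\lambda_1(U),\dots,\lambda_t(U))$. Problem $\mathrm{mLRPOTA}(t)$: maximize $\sum_{j=1}^t\lambda_j(U)^2$ over $\mathrm V(t,n_1)\times\cdots\times\mathrm V(t,n_s)\times\mathrm B(t,n_{s+1})\times\cdots\times\mathrm B(t,n_k)$. A feasible $U$ is a KKT point iff there exist symmetric $P_1,\dots,P_s\in\mathbb R^{t\times t}$ and $\mathbf p\in\mathbb R^t$ with $V^{(i)}\Lambda=U^{(i)}P_i$ ($i\le s$) and $V^{(i)}\Lambda=U^{(i)}\operatorname{diag}(\mathbf p)$ ($i>s$) (the Lagrange/KKT conditions of the problem). *)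

theory Defs
  imports "HOL-Analysis.Analysis"
begin

(* Conventions (0-indexed):
   - modes i < k, mode i has dimension n i;
   - a tensor A is a real function on multi-indices idx \<in> PiE {..<k} (\<lambda>i. {..<n i});
   - a factor matrix U i :: nat \<Rightarrow> nat \<Rightarrow> real has entry U i a c (row a < n i, column c < t);
   - the first s modes (i < s) carry Stiefel constraints, the remaining ones unit-column constraints. *)

type_synonym tensor = "(nat \<Rightarrow> nat) \<Rightarrow> real"
type_synonym factors = "nat \<Rightarrow> nat \<Rightarrow> nat \<Rightarrow> real"

definition multi_idx :: "nat \<Rightarrow> (nat \<Rightarrow> nat) \<Rightarrow> (nat \<Rightarrow> nat) set" where
  "multi_idx k n = PiE {..<k} (\<lambda>i. {..<n i})"

definition stiefel :: "nat \<Rightarrow> nat \<Rightarrow> (nat \<Rightarrow> nat \<Rightarrow> real) \<Rightarrow> bool" where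
  "stiefel t m M \<longleftrightarrow> (\<forall>c<t. \<forall>d<t. (\<Sum>a<m. M a c * M a d) = (if c = d then 1 else 0))"

definition unit_cols :: "nat \<Rightarrow> nat \<Rightarrow> (nat \<Rightarrow> nat \<Rightarrow> real) \<Rightarrow> bool" where
  "unit_cols t m M \<longleftrightarrow> (\<forall>c<t. (\<Sum>a<m. (M a c)\<^sup>2) = 1)"

definition feasible :: "nat \<Rightarrow> nat \<Rightarrow> (nat \<Rightarrow> nat) \<Rightarrow> nat \<Rightarrow> factors \<Rightarrow> bool" where
  "feasible k s n t U \<longleftrightarrow>
     (\<forall>i<s. stiefel t (n i) (U i)) \<and> (\<forall>i. s \<le> i \<and> i < k \<longrightarrow> unit_cols t (n i) (U i))"

definition lam :: "nat \<Rightarrow> (nat \<Rightarrow> nat) \<Rightarrow> tensor \<Rightarrow> factors \<Rightarrow> nat \<Rightarrow> real" where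
  "lam k n A U j = (\<Sum>idx\<in>multi_idx k n. A idx * (\<Prod>l<k. U l (idx l) j))"

definition vvec :: "nat \<Rightarrow> (nat \<Rightarrow> nat) \<Rightarrow> tensor \<Rightarrow> factors \<Rightarrow> nat \<Rightarrow> nat \<Rightarrow> nat \<Rightarrow> real" where
  "vvec k n A U i j a =
     (\<Sum>idx\<in>{idx\<in>multi_idx k n. idx i = a}. A idx * (\<Prod>l\<in>{..<k} - {i}. U l (idx l) j))"

definition KKT :: "nat \<Rightarrow> nat \<Rightarrow> (nat \<Rightarrow> nat) \<Rightarrow> tensor \<Rightarrow> nat \<Rightarrow> factors \<Rightarrow> bool" where
  "KKT k s n A t U \<longleftrightarrow> feasible k s n t U \<and>
     (\<exists>P :: nat \<Rightarrow> nat \<Rightarrow> nat \<Rightarrow> real. \<exists>p :: nat \<Rightarrow> real.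
        (\<forall>i<s. \<forall>c<t. \<forall>d<t. P i c d = P i d c) \<and>
        (\<forall>i<s. \<forall>a<n i. \<forall>c<t.
           vvec k n A U i c a * lam k n A U c = (\<Sum>d<t. U i a d * P i d c)) \<and>
        (\<forall>i. s \<le> i \<and> i < k \<longrightarrow> (\<forall>a<n i. \<forall>c<t.
           vvec k n A U i c a * lam k n A U c = U i a c * p c)))"

definition del_col :: "nat \<Rightarrow> factors \<Rightarrow> factors" where
  "del_col j U = (\<lambda>i a c. U i a (if c < j then c else Suc c))"

end

theory Submission
  imports Defs
begin

(* On a Stiefel mode the multiplier is determined by the KKT equation:
   P_i = U^(i)T V^(i) \<Lambda>, i.e. P_i(d,c) = <u_d, v_c> \<lambda>_c. By symmetry
   P_i(j,c) = P_i(c,j) = <u_c, v_j> \<lambda>_j = 0, so the j-th column of U^(i)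
   contributes nothing to U^(i) P_i and may be deleted together with the j-th
   row and column of P_i. On unit-column modes the equations hold column by
   column, so deleting a column is harmless. *)

definition skip :: "nat \<Rightarrow> nat \<Rightarrow> nat" where
  "skip j c = (if c < j then c else Suc c)"

lemma skip_neq: "skip j c \<noteq> j"
  by (simp add: skip_def)

lemma skip_eq_iff: "skip j c = skip j d \<longleftrightarrow> c = d"
  by (auto simp: skip_def)

lemma skip_less: "j < r \<Longrightarrow> c < r - 1 \<Longrightarrow> skip j c < r"
  by (auto simp: skip_def)

lemma inj_skip: "inj (skip j)"
  by (simp add: inj_def skip_eq_iff)

lemma skip_image_lessThan:
  assumes "j < r"
  shows "skip j ` {..<r - 1} = {..<r} - {j}"
proof
  show "skip j ` {..<r - 1} \<subseteq> {..<r} - {j}"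
    using assms by (auto simp: skip_less skip_neq)
  show "{..<r} - {j} \<subseteq> skip j ` {..<r - 1}"
  proof
    fix x assume x: "x \<in> {..<r} - {j}"
    show "x \<in> skip j ` {..<r - 1}"
    proof (cases "x < j")
      case True
      then show ?thesis using assms by (intro image_eqI[of _ _ x]) (auto simp: skip_def)
    next
      case False
      then show ?thesis using x by (intro image_eqI[of _ _ "x - 1"]) (auto simp: skip_def)
    qed
  qed
qed

lemma sum_lessThan_skip:
  assumes "j < r" and "f j = 0"
  shows "(\<Sum>d<r. f d) = (\<Sum>d<r - 1. f (skip j d))"
proof -
  have "(\<Sum>d<r. f d) = sum f ({..<r} - {j})"
    using assms by (simp add: sum.remove)
  also have "\<dots> = sum f (skip j ` {..<r - 1})"
    using skip_image_lessThan[OF assms(1)] by simp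
  also have "\<dots> = (\<Sum>d<r - 1. f (skip j d))"
    by (simp add: sum.reindex inj_on_subset[OF inj_skip])
  finally show ?thesis .
qed

lemma del_col_eq_skip: "del_col j U = (\<lambda>i a c. U i a (skip j c))"
  by (simp add: del_col_def skip_def)

lemma lam_del_col: "lam k n A (del_col j U) c = lam k n A U (skip j c)"
  by (simp add: lam_def del_col_eq_skip)

lemma vvec_del_col: "vvec k n A (del_col j U) i c a = vvec k n A U i (skip j c) a"
  by (simp add: vvec_def del_col_eq_skip)

lemma stiefel_skip:
  "stiefel r m M \<Longrightarrow> j < r \<Longrightarrow> stiefel (r - 1) m (\<lambda>a c. M a (skip j c))"
  by (simp add: stiefel_def skip_less skip_eq_iff)

lemma unit_cols_skip:
  "unit_cols r m M \<Longrightarrow> j < r \<Longrightarrow> unit_cols (r - 1) m (\<lambda>a c. M a (skip j c))"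
  by (simp add: unit_cols_def skip_less)

lemma feasible_del_col:
  "feasible k s n r U \<Longrightarrow> j < r \<Longrightarrow> feasible k s n (r - 1) (del_col j U)"
  unfolding feasible_def del_col_eq_skip by (blast intro: stiefel_skip unit_cols_skip)

lemma stiefel_multiplier_eq:
  assumes "stiefel r m M"
    and "\<forall>a<m. \<forall>c<r. W a c = (\<Sum>e<r. M a e * P e c)"
    and "d < r" and "c < r"
  shows "P d c = (\<Sum>a<m. M a d * W a c)"
proof -
  have "(\<Sum>a<m. M a d * W a c) = (\<Sum>a<m. M a d * (\<Sum>e<r. M a e * P e c))"
    using assms(2,4) by simp
  also have "\<dots> = (\<Sum>e<r. (\<Sum>a<m. M a d * M a e) * P e c)"
    by (simp add: sum_distrib_left sum_distrib_right mult.assoc sum.swap[of _ "{..<m}"])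
  also have "\<dots> = (\<Sum>e<r. if d = e then P e c else 0)"
    using assms(1,3) unfolding stiefel_def by (intro sum.cong) auto
  also have "\<dots> = P d c"
    using assms(3) by simp
  finally show ?thesis by simp
qed

lemma stiefel_symmetric_multiplier_row_zero:
  assumes "stiefel r m M"
    and "\<forall>a<m. \<forall>c<r. W a c = (\<Sum>e<r. M a e * P e c)"
    and "\<forall>c<r. \<forall>d<r. P c d = P d c"
    and "\<forall>a<m. W a j = 0" and "j < r" and "c < r"
  shows "P j c = 0"
  using assms stiefel_multiplier_eq[OF assms(1,2) \<open>c < r\<close> \<open>j < r\<close>] by simp

lemma stiefel_multiplier_eq_skip:
  assumes "stiefel r m M"
    and W: "\<forall>a<m. \<forall>c<r. W a c = (\<Sum>e<r. M a e * P e c)"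
    and "\<forall>c<r. \<forall>d<r. P c d = P d c"
    and "\<forall>a<m. W a j = 0" and "j < r" and "a < m" and "c < r - 1"
  shows "W a (skip j c) = (\<Sum>d<r - 1. M a (skip j d) * P (skip j d) (skip j c))"
proof -
  have c: "skip j c < r"
    using assms(5,7) by (rule skip_less)
  have "P j (skip j c) = 0"
    using assms(1-5) c by (rule stiefel_symmetric_multiplier_row_zero)
  then have "(\<Sum>e<r. M a e * P e (skip j c)) = (\<Sum>d<r - 1. M a (skip j d) * P (skip j d) (skip j c))"
    using assms(5) by (simp add: sum_lessThan_skip)
  then show ?thesis
    using W assms(6) c by simp
qed

theorem proposition4p3:
  fixes k s r j :: nat and n :: "nat \<Rightarrow> nat" and A :: tensor and U :: factors
  assumes "1 \<le> s" and "s \<le> k"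
    and "2 \<le> r" and "\<forall>i<s. r \<le> n i"
    and "KKT k s n A r U"
    and "j < r"
    and "lam k n A U j = 0"
  shows "KKT k s n A (r - 1) (del_col j U)"
proof -
  from assms(5) obtain P p where
    feas: "feasible k s n r U" and
    sym: "\<forall>i<s. \<forall>c<r. \<forall>d<r. P i c d = P i d c" and
    stiefel_eq: "\<forall>i<s. \<forall>a<n i. \<forall>c<r.
      vvec k n A U i c a * lam k n A U c = (\<Sum>d<r. U i a d * P i d c)" and
    unit_eq: "\<forall>i. s \<le> i \<and> i < k \<longrightarrow> (\<forall>a<n i. \<forall>c<r.
      vvec k n A U i c a * lam k n A U c = U i a c * p c)"
    unfolding KKT_def by blast
  have stiefel_eq_del: "vvec k n A U i (skip j c) a * lam k n A U (skip j c)
      = (\<Sum>d<r - 1. U i a (skip j d) * P i (skip j d) (skip j c))"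
    if "i < s" "a < n i" "c < r - 1" for i a c
    using feas that stiefel_eq sym assms(6,7) unfolding feasible_def
    by (intro stiefel_multiplier_eq_skip[where W = "\<lambda>a c. vvec k n A U i c a * lam k n A U c"])
      auto
  show ?thesis
    unfolding KKT_def vvec_del_col lam_del_col
    using feasible_del_col[OF feas assms(6)] stiefel_eq_del unit_eq sym assms(6) skip_less
    by (intro conjI exI[of _ "\<lambda>i c d. P i (skip j c) (skip j d)"] exI[of _ "\<lambda>c. p (skip j c)"])
      (auto simp: del_col_eq_skip)
qed

end
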